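(* Let $d\geq 1000$, let $\Omega\subseteq\mathbb{R}^d$ be bounded and measurable, let $\lambda=\left(\frac{\sqrt d}{8\log d}\right)^d$, $\Delta=2^d\lambda$, let $\mathbf X$ be a Poisson point process of intensity $\lambda$ on $\Omega$, and put $\eta=e^{-(\log d)^2/8}$. Then \[ \mathbb{E}\left|\left\{x\in\mathbf X:\ |\mathbf X\cap B_x(2r_d)\cap B_y(2r_d)|\geq\eta\Delta\text{ for some }y\in\mathbf X\setminus\{x\}\right\}\right|\leq(2d)^{-1}\,\mathbb{E}|\mathbf X|. \]
   Context: $r_d$ is the radius of the Euclidean ball of volume $1$ in $\mathbb{R}^d$; $B_x(r)$ is the closed Euclidean ball of radius $r$ centred at $x$. $\log$ is the natural logarithm. *)

theory Defs
  imports "HOL-Analysis.Analysis"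
begin

definition unit_vol_radius :: "'a::euclidean_space itself \<Rightarrow> real" where
  "unit_vol_radius _ = (THE r. r > 0 \<and> measure lebesgue (cball (0::'a) r) = 1)"

text \<open>Expectation of a nonnegative functional F of a Poisson point process of intensity lam
  on a bounded measurable set Om: the number of points is Poisson(lam * vol Om) and, given
  there are n points, they are i.i.d. uniform on Om.\<close>
definition ppp_expect :: "real \<Rightarrow> 'a::euclidean_space set \<Rightarrow> ('a set \<Rightarrow> ennreal) \<Rightarrow> ennreal" where
  "ppp_expect lam Om F =
     (\<Sum>n. ennreal (exp (- lam * measure lebesgue Om) * lam ^ n / fact n) *
        (\<integral>\<^sup>+ p. F (p ` {..<n}) \<partial>(PiM {..<n} (\<lambda>_. restrict_space lebesgue Om))))"

end

theory Submission
  imports Defs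
begin

(*
  Put u = 3 ln d / sqrt d and R = 2 r_d.  If x is crowded with partner y, then either
  |x - y| <= u r_d, and the expected number of such partners of a point is at most lambda u^d, or
  u r_d < |x - y| <= 2 R and the lens B_x(R) \<inter> B_y(R) holds at least eta Delta - 2 of the
  other points.  The lens lies in the ball of radius sqrt (R^2 - (u r_d)^2 / 4) about the
  midpoint of x and y, so the number of points in it has exponential moment at most
  exp (lambda (e - 1) (4 - u^2/4)^(d/2)), and by Markov's inequality the second case costs
  lambda 4^d exp (2 - eta Delta + lambda (e - 1) (4 - u^2/4)^(d/2)).  Summing over ordered
  pairs and over the Poisson number of points bounds the expectation by lambda |Omega| times
  the sum of the two costs, and for d >= 1000 each of them is at most 1/(4d).
*)

section \<open>Balls of volume one and lenses\<close>

lemma unit_vol_radius_pos: "unit_vol_radius TYPE('a::euclidean_space) > 0"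
  and unit_ball_vol_mult_unit_vol_radius_power: "unit_ball_vol DIM('a) * unit_vol_radius TYPE('a) ^ DIM('a) = 1"
proof -
  define w where "w = unit_ball_vol DIM('a)"
  define r0 where "r0 = (1 / w) powr (1 / DIM('a))"
  have w: "w > 0" unfolding w_def by simp
  have r0: "r0 > 0" and r0_power: "w * r0 ^ DIM('a) = 1"
    using w by (simp_all add: r0_def powr_realpow[symmetric] powr_powr)
  have "r > 0 \<and> measure lebesgue (cball (0::'a) r) = 1 \<longleftrightarrow> r = r0" for r
  proof (cases "r > 0")
    case True
    have "measure lebesgue (cball (0::'a) r) = w * r ^ DIM('a)"
      using True content_cball[of r "0::'a"] by (simp add: w_def)
    also have "\<dots> = 1 \<longleftrightarrow> r ^ DIM('a) = r0 ^ DIM('a)"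
      using w r0_power by (metis mult_cancel_left less_irrefl)
    also have "\<dots> \<longleftrightarrow> r = r0"
      using True r0 by (simp add: power_eq_iff_eq_base)
    finally show ?thesis using True by simp
  qed (use r0 in auto)
  then have "unit_vol_radius TYPE('a) = r0"
    unfolding unit_vol_radius_def by simp
  then show "unit_vol_radius TYPE('a) > 0" "w * unit_vol_radius TYPE('a) ^ DIM('a) = 1"
    using r0 r0_power by simp_all
qed

lemma emeasure_cball_unit_vol_radius:
  fixes c :: "'a::euclidean_space"
  assumes "0 \<le> s"
  shows "emeasure lebesgue (cball c s) = ennreal ((s / unit_vol_radius TYPE('a)) ^ DIM('a))"
proof -
  let ?r = "unit_vol_radius TYPE('a)"
  have "?r > 0" "unit_ball_vol DIM('a) * ?r ^ DIM('a) = 1"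
    by (rule unit_vol_radius_pos unit_ball_vol_mult_unit_vol_radius_power)+
  then have "unit_ball_vol DIM('a) = 1 / ?r ^ DIM('a)"
    by (simp add: field_simps)
  then have "unit_ball_vol DIM('a) * s ^ DIM('a) = (s / ?r) ^ DIM('a)"
    by (simp add: power_divide)
  then show ?thesis
    using emeasure_cball[OF assms, of c] by simp
qed

lemma lens_subset_cball_midpoint:
  fixes x y :: "'a::real_inner"
  assumes "0 \<le> t" "t \<le> dist x y"
  shows "cball x R \<inter> cball y R \<subseteq> cball (midpoint x y) (sqrt (R\<^sup>2 - t\<^sup>2 / 4))"
proof
  fix z assume z: "z \<in> cball x R \<inter> cball y R"
  define a where "a = z - x"
  define b where "b = z - y"
  have mid: "z - midpoint x y = (1/2) *\<^sub>R (a + b)" and diff: "x - y = b - a"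
    unfolding a_def b_def midpoint_def by (simp_all add: algebra_simps flip: scaleR_add_left)
  have parallelogram: "(norm (a + b))\<^sup>2 + (norm (b - a))\<^sup>2 = 2 * (norm a)\<^sup>2 + 2 * (norm b)\<^sup>2"
    by (simp add: power2_norm_eq_inner inner_simps inner_commute)
  have "norm a \<le> R" "norm b \<le> R" "t \<le> norm (b - a)"
    using z assms(2) unfolding a_def b_def diff[symmetric] by (auto simp: dist_norm norm_minus_commute)
  then have "(norm a)\<^sup>2 \<le> R\<^sup>2" "(norm b)\<^sup>2 \<le> R\<^sup>2" "t\<^sup>2 \<le> (norm (b - a))\<^sup>2"
    using assms(1) by (auto intro!: power_mono)
  then have "(norm (z - midpoint x y))\<^sup>2 \<le> R\<^sup>2 - t\<^sup>2 / 4"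
    using parallelogram unfolding mid by (simp add: power_divide)
  then show "z \<in> cball (midpoint x y) (sqrt (R\<^sup>2 - t\<^sup>2 / 4))"
    by (simp add: dist_norm norm_minus_commute real_le_rsqrt)
qed

lemma lens_radius_nonneg: "0 \<le> t \<Longrightarrow> t \<le> 2 * R \<Longrightarrow> 0 \<le> sqrt (R\<^sup>2 - t\<^sup>2 / 4)"
  using power_mono[of t "2 * R" 2] by (simp add: power_mult_distrib)

section \<open>Numerical estimates for \<open>d \<ge> 1000\<close>\<close>

lemma power_div_le_exp:
  fixes x :: real
  assumes "0 \<le> x" "0 < k"
  shows "(x / k) ^ k \<le> exp x"
proof -
  have "(x / k) ^ k \<le> (1 + x / k) ^ k"
    using assms by (intro power_mono) auto
  also have "\<dots> \<le> exp x"
    using assms by (intro exp_ge_one_plus_x_over_n_power_n) auto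
  finally show ?thesis .
qed

lemma ln_ge_four:
  fixes x :: real
  assumes "1000 \<le> x"
  shows "4 \<le> ln x"
proof -
  have "exp 4 = exp (1::real) ^ 4"
    by (simp add: exp_of_nat_mult[symmetric])
  also have "\<dots> \<le> (272/100) ^ 4"
    using e_less_272 by (intro power_mono) auto
  also have "\<dots> \<le> x"
    using assms by (simp add: power_divide)
  finally show ?thesis
    using assms by (simp add: ln_ge_iff)
qed

lemma ln_le_sqrt_div_1000:
  fixes x :: real
  assumes "1000 \<le> x"
  shows "ln x \<le> 15/2 * sqrt (x / 1000)"
proof -
  define s where "s = sqrt (x / 1000)"
  have s: "1 \<le> s" and x: "x = 1000 * s\<^sup>2"
    using assms by (simp_all add: s_def)
  have "(1000::real) \<le> (1 + (15/2) / 60) ^ 60"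
    by (simp add: power_divide)
  also have "\<dots> \<le> exp (15/2)"
    using exp_ge_one_plus_x_over_n_power_n[of 60 "15/2"] by simp
  finally have "ln 1000 \<le> (15/2::real)"
    by (metis exp_gt_zero ln_exp ln_le_cancel_iff zero_less_numeral)
  moreover have "ln x = ln 1000 + 2 * ln s"
    using s by (simp add: x ln_mult ln_realpow)
  moreover have "ln s \<le> s - 1"
    using s by (intro ln_le_minus_one) simp
  ultimately show ?thesis
    using s unfolding s_def by linarith
qed

lemma ln_mult_le_sqrt:
  fixes x :: real
  assumes "1000 \<le> x"
  shows "316/75 * ln x \<le> sqrt x"
proof -
  have "(316/10) ^ 2 \<le> (1000::real)"
    by (simp add: power_divide)
  then have "316/10 \<le> sqrt (1000::real)"
    by (rule real_le_rsqrt)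
  then have "316/10 * sqrt (x / 1000) \<le> sqrt 1000 * sqrt (x / 1000)"
    by (rule mult_right_mono) (use assms in simp)
  also have "\<dots> = sqrt x"
    by (simp flip: real_sqrt_mult)
  finally show ?thesis
    using ln_le_sqrt_div_1000[OF assms] by linarith
qed

lemma ln_squared_le:
  fixes x :: real
  assumes "1000 \<le> x"
  shows "(ln x)\<^sup>2 \<le> 57/1000 * x"
proof -
  have "(ln x)\<^sup>2 \<le> (15/2 * sqrt (x / 1000))\<^sup>2"
    using ln_le_sqrt_div_1000[OF assms] ln_ge_four[OF assms] by (intro power_mono) auto
  also have "\<dots> = 225/4 * (sqrt (x / 1000))\<^sup>2"
    by (simp add: power_mult_distrib power_divide)
  also have "\<dots> = 225/4 * (x / 1000)"
    using assms by simp
  finally show ?thesis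
    using assms by linarith
qed

lemma four_mult_le_two_power: "5 \<le> n \<Longrightarrow> 4 * n \<le> 2 ^ n"
  by (induction n rule: dec_induct) simp_all

lemma close_pair_term_le:
  fixes d :: nat
  assumes "1000 \<le> d"
  shows "(sqrt d / (8 * ln d)) ^ d * (3 * ln d / sqrt d) ^ d \<le> 1 / (4 * real d)"
proof -
  have "0 < ln (real d)" "0 < sqrt (real d)"
    using ln_ge_four[of d] assms by simp_all
  then have "(sqrt d / (8 * ln d)) ^ d * (3 * ln d / sqrt d) ^ d = (3/8 :: real) ^ d"
    by (simp flip: power_mult_distrib)
  also have "\<dots> \<le> (1/2) ^ d"
    by (intro power_mono) simp_all
  also have "\<dots> \<le> 1 / (4 * real d)"
  proof -
    have "real (4 * d) \<le> real (2 ^ d)"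
      using four_mult_le_two_power[of d] assms by (simp only: of_nat_le_iff)
    then show ?thesis
      using assms by (simp add: field_simps)
  qed
  finally show ?thesis .
qed

lemma sqrt_four_minus_le_exp: "sqrt (4 - u\<^sup>2 / 4) \<le> 2 * exp (- (u\<^sup>2 / 32))"
proof (rule real_le_lsqrt)
  have "4 - u\<^sup>2 / 4 \<le> 4 * exp (- (u\<^sup>2 / 16))"
    using exp_ge_add_one_self[of "- (u\<^sup>2 / 16)"] by linarith
  also have "\<dots> = (2 * exp (- (u\<^sup>2 / 32)))\<^sup>2"
    by (simp add: power2_eq_square flip: exp_add)
  finally show "4 - u\<^sup>2 / 4 \<le> (2 * exp (- (u\<^sup>2 / 32)))\<^sup>2" .
qed simp

lemma exp_one_minus_one_mult_exp_le:
  fixes L :: real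
  assumes "4 \<le> L"
  shows "(exp 1 - 1) * exp (- (9 * L\<^sup>2 / 32)) \<le> exp (- (L\<^sup>2 / 8)) / 2"
proof -
  have "16 \<le> L\<^sup>2"
    using assms power_mono[of 4 L 2] by simp
  then have "2 * (exp 1 - 1) \<le> 1 + 5 * L\<^sup>2 / 32"
    using e_less_272 by simp
  also have "\<dots> \<le> exp (5 * L\<^sup>2 / 32)"
    by (rule exp_ge_add_one_self)
  finally have "2 * (exp 1 - 1) \<le> exp (5 * L\<^sup>2 / 32)" .
  then have "(exp 1 - 1) * exp (- (9 * L\<^sup>2 / 32)) \<le> exp (5 * L\<^sup>2 / 32) * exp (- (9 * L\<^sup>2 / 32)) / 2"
    using mult_right_mono[of "2 * (exp 1 - 1)" _ "exp (- (9 * L\<^sup>2 / 32))"] by simp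
  also have "\<dots> = exp (- (L\<^sup>2 / 8)) / 2"
    by (simp flip: exp_add)
  finally show ?thesis .
qed

lemma lens_term_le:
  fixes d :: nat
  assumes "1000 \<le> d"
  defines "L \<equiv> ln (real d)"
  defines "u \<equiv> 3 * L / sqrt d"
  shows "(exp 1 - 1) * sqrt (4 - u\<^sup>2 / 4) ^ d \<le> exp (- (L\<^sup>2 / 8)) * 2 ^ d / 2"
proof -
  have L: "4 \<le> L" "3 * L \<le> sqrt d"
    using ln_ge_four[of d] ln_mult_le_sqrt[of d] assms by (simp_all add: L_def)
  moreover have "0 < sqrt (real d)"
    using assms by simp
  ultimately have "u \<le> 1" "0 \<le> u"
    by (simp_all add: u_def)
  then have u2: "u\<^sup>2 \<le> 1"
    by (simp add: power_le_one)
  have "sqrt (4 - u\<^sup>2 / 4) ^ d \<le> (2 * exp (- (u\<^sup>2 / 32))) ^ d"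
    using u2 sqrt_four_minus_le_exp[of u] by (intro power_mono) simp_all
  also have "\<dots> = 2 ^ d * exp (- (9 * L\<^sup>2 / 32))"
  proof -
    have "real d * (u\<^sup>2 / 32) = 9 * L\<^sup>2 / 32"
      using assms by (simp add: u_def power_divide power_mult_distrib)
    then show ?thesis
      by (simp add: power_mult_distrib flip: exp_of_nat_mult)
  qed
  finally have lens: "sqrt (4 - u\<^sup>2 / 4) ^ d \<le> 2 ^ d * exp (- (9 * L\<^sup>2 / 32))" .
  have "(exp 1 - 1) * sqrt (4 - u\<^sup>2 / 4) ^ d \<le> (exp 1 - 1) * (2 ^ d * exp (- (9 * L\<^sup>2 / 32)))"
    using lens exp_ge_add_one_self[of 1] by (intro mult_left_mono) simp_all
  also have "\<dots> = 2 ^ d * ((exp 1 - 1) * exp (- (9 * L\<^sup>2 / 32)))"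
    by (simp only: mult_ac)
  also have "\<dots> \<le> 2 ^ d * (exp (- (L\<^sup>2 / 8)) / 2)"
    using exp_one_minus_one_mult_exp_le[OF L(1)] by (intro mult_left_mono) simp_all
  finally show ?thesis
    by (simp add: ac_simps)
qed

lemma ln_sqrt_div_four_ln_ge:
  fixes x :: real
  assumes "1000 \<le> x"
  shows "1/20 \<le> ln (sqrt x / (4 * ln x))"
proof -
  define y where "y = sqrt x / (4 * ln x)"
  have "79/75 \<le> y"
    using ln_mult_le_sqrt[OF assms] ln_ge_four[OF assms] by (simp add: y_def field_simps)
  then have "0 < y" "1 / y \<le> 75/79"
    by (simp_all add: field_simps)
  moreover have "- ln y \<le> 1 / y - 1"
    using ln_le_minus_one[of "1 / y"] \<open>0 < y\<close> by (simp add: ln_div)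
  ultimately have "1/20 \<le> ln y"
    by linarith
  then show ?thesis
    by (simp add: y_def)
qed

lemma two_square_le_exp:
  fixes D :: real
  assumes "1000 \<le> D"
  shows "2 * D\<^sup>2 \<le> exp (21 * D / 500)"
proof -
  have "(2::real) \<le> (21/7500) ^ 15 * 1000 ^ 13"
    by (simp add: power_divide)
  then have "2 * D\<^sup>2 \<le> (21/7500) ^ 15 * 1000 ^ 13 * D\<^sup>2"
    by (intro mult_right_mono) simp_all
  also have "\<dots> \<le> (21/7500) ^ 15 * D ^ 13 * D\<^sup>2"
    using assms by (intro mult_right_mono mult_left_mono power_mono) simp_all
  also have "\<dots> = ((21 * D / 500) / 15) ^ 15"
    by (simp add: power_mult_distrib power_divide flip: power_add)
  also have "\<dots> \<le> exp (21 * D / 500)"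
    using power_div_le_exp[of "21 * D / 500" 15] assms by simp
  finally show ?thesis .
qed

lemma crowding_threshold_ge:
  fixes d :: nat
  assumes "1000 \<le> d"
  shows "2 * real d ^ 2 \<le> exp (- ((ln d)\<^sup>2 / 8)) * (2 ^ d * (sqrt d / (8 * ln d)) ^ d)"
proof -
  define D where "D = real d"
  define L where "L = ln D"
  have D: "1000 \<le> D"
    using assms by (simp add: D_def)
  have L: "0 < L"
    using ln_ge_four[OF D] by (simp add: L_def)
  have "2 * D\<^sup>2 \<le> exp (21 * D / 500)"
    using D by (rule two_square_le_exp)
  also have "\<dots> \<le> exp (D * ln (sqrt D / (4 * L)) - L\<^sup>2 / 8)"
  proof -
    have "D / 20 \<le> D * ln (sqrt D / (4 * L))"
      using ln_sqrt_div_four_ln_ge[OF D] D by (simp add: L_def mult_left_mono)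
    moreover have "L\<^sup>2 \<le> 57/1000 * D"
      using ln_squared_le[OF D] by (simp add: L_def)
    ultimately have "21 * D / 500 \<le> D * ln (sqrt D / (4 * L)) - L\<^sup>2 / 8"
      using D by linarith
    then show ?thesis
      by simp
  qed
  also have "\<dots> = exp (- (L\<^sup>2 / 8)) * exp (real d * ln (sqrt D / (4 * L)))"
    by (simp add: D_def flip: exp_add)
  also have "exp (real d * ln (sqrt D / (4 * L))) = (sqrt D / (4 * L)) ^ d"
    using D L by (simp add: exp_of_nat_mult)
  also have "(sqrt D / (4 * L)) ^ d = 2 ^ d * (sqrt D / (8 * L)) ^ d"
    by (simp flip: power_mult_distrib)
  finally show ?thesis
    by (simp add: D_def L_def)
qed

lemma ln_four_le_two: "ln (4::real) \<le> 2"
proof -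
  have "(4::real) \<le> exp 1 ^ 2"
    using exp_ge_add_one_self[of 1] power_mono[of 2 "exp (1::real)" 2] by simp
  then show ?thesis
    by (metis exp_gt_zero exp_of_nat_mult ln_exp ln_le_cancel_iff of_nat_numeral mult.right_neutral
        zero_less_numeral)
qed

lemma far_pair_term_le:
  fixes d :: nat and N :: real
  assumes "1000 \<le> d" "2 * real d ^ 2 \<le> N"
  shows "(sqrt d / (8 * ln d)) ^ d * 4 ^ d * exp (2 - N / 2) \<le> 1 / (4 * real d)"
proof -
  define D where "D = real d"
  define L where "L = ln D"
  have D: "1000 \<le> D"
    using assms by (simp add: D_def)
  have L: "4 \<le> L" "L \<le> D - 1"
    using ln_ge_four[OF D] ln_le_minus_one[of D] D by (simp_all add: L_def)
  have "(sqrt D / (8 * L)) ^ d * 4 ^ d = (sqrt D / (2 * L)) ^ d"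
    by (simp flip: power_mult_distrib)
  also have "\<dots> \<le> sqrt D ^ d"
    using L by (intro power_mono) (simp_all add: field_simps)
  also have "\<dots> = exp (D * (L / 2))"
    using D by (simp add: D_def L_def exp_of_nat_mult ln_sqrt[symmetric])
  finally have "(sqrt D / (8 * L)) ^ d * 4 ^ d * exp (2 - N / 2) \<le> exp (D * (L / 2)) * exp (2 - N / 2)"
    by (simp add: mult_right_mono)
  also have "\<dots> \<le> exp (- (ln 4 + L))"
  proof -
    have "D * L \<le> D * D - D"
      using mult_left_mono[of L "D - 1" D] L D by (simp add: algebra_simps)
    moreover have "1000 * D \<le> D * D"
      using mult_right_mono[of 1000 D D] D by simp
    moreover have "2 * (D * D) \<le> N"
      using assms(2) by (simp add: D_def power2_eq_square)
    ultimately have "D * (L / 2) + 2 - N / 2 \<le> - (ln 4 + L)"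
      using L ln_four_le_two by linarith
    then show ?thesis
      by (simp flip: exp_add)
  qed
  also have "\<dots> = 1 / (4 * D)"
  proof -
    have "ln 4 + L = ln (4 * D)"
      using D by (simp add: L_def ln_mult)
    then show ?thesis
      using D by (simp add: exp_minus inverse_eq_divide)
  qed
  finally show ?thesis
    by (simp add: D_def L_def)
qed

lemma parameter_bound:
  fixes d :: nat and lam Delta eta :: real
  assumes d: "1000 \<le> d"
    and lam: "lam = (sqrt d / (8 * ln d)) ^ d" and Delta: "Delta = 2 ^ d * lam"
    and eta: "eta = exp (- ((ln (real d))\<^sup>2 / 8))"
  defines "u \<equiv> 3 * ln d / sqrt d"
  shows "lam * u ^ d + lam * 4 ^ d * exp (2 - eta * Delta + lam * (exp 1 - 1) * sqrt (4 - u\<^sup>2 / 4) ^ d)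
    \<le> 1 / (2 * d)"
proof -
  have "0 < lam"
    using ln_ge_four[of d] d by (simp add: lam)
  then have "lam * ((exp 1 - 1) * sqrt (4 - u\<^sup>2 / 4) ^ d) \<le> lam * (eta * 2 ^ d / 2)"
    using lens_term_le[OF d] by (intro mult_left_mono) (simp_all add: eta u_def)
  then have "exp (2 - eta * Delta + lam * (exp 1 - 1) * sqrt (4 - u\<^sup>2 / 4) ^ d) \<le> exp (2 - eta * Delta / 2)"
    by (simp add: Delta algebra_simps)
  then have "lam * 4 ^ d * exp (2 - eta * Delta + lam * (exp 1 - 1) * sqrt (4 - u\<^sup>2 / 4) ^ d)
      \<le> lam * 4 ^ d * exp (2 - eta * Delta / 2)"
    using \<open>0 < lam\<close> by (intro mult_left_mono) simp_all
  also have "\<dots> \<le> 1 / (4 * d)"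
    using far_pair_term_le[OF d] crowding_threshold_ge[OF d] by (simp add: lam Delta eta)
  finally show ?thesis
    using close_pair_term_le[OF d] by (simp add: lam u_def)
qed

lemma pred_in_cball [measurable]:
  fixes f g :: "'b \<Rightarrow> 'a::euclidean_space"
  assumes [measurable]: "f \<in> borel_measurable M" "g \<in> borel_measurable M"
  shows "Measurable.pred M (\<lambda>w. g w \<in> cball (f w) s)"
  unfolding mem_cball by measurable

lemma measurable_ident_lebesgue_on [measurable]: "(\<lambda>x. x) \<in> lebesgue_on S \<rightarrow>\<^sub>M borel"
  using id_borel_measurable_lebesgue_on by (simp add: id_def)

lemma nn_integral_PiM_pair_prod:
  fixes M :: "'b measure" and f :: "'b \<times> 'b \<Rightarrow> ennreal" and g :: "'b \<times> 'b \<times> 'b \<Rightarrow> ennreal"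
  assumes "sigma_finite_measure M" and I: "finite I" "i \<in> I" "j \<in> I" "i \<noteq> j"
    and [measurable]: "f \<in> borel_measurable (M \<Otimes>\<^sub>M M)" "g \<in> borel_measurable (M \<Otimes>\<^sub>M (M \<Otimes>\<^sub>M M))"
  shows "(\<integral>\<^sup>+p. f (p i, p j) * (\<Prod>l\<in>I - {i, j}. g (p i, p j, p l)) \<partial>PiM I (\<lambda>_. M))
    = (\<integral>\<^sup>+x. \<integral>\<^sup>+y. f (x, y) * (\<integral>\<^sup>+z. g (x, y, z) \<partial>M) ^ (card I - 2) \<partial>M \<partial>M)"
proof -
  interpret product_sigma_finite "\<lambda>_. M"
    using assms(1) by (simp add: product_sigma_finite_def)
  interpret sigma_finite_measure M
    by fact
  define J where "J = I - {i, j}"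
  have J: "finite J" "finite (insert j J)" "i \<notin> insert j J" "j \<notin> J" "I = insert i (insert j J)" "card J = card I - 2"
    using I by (auto simp: J_def card_Diff_subset)
  have [measurable]: "i \<in> I" "j \<in> I" "\<And>l. l \<in> J \<Longrightarrow> l \<in> I"
    using I by (auto simp: J_def)
  have [measurable]: "x \<in> space M \<Longrightarrow> (\<lambda>q. f (x, q j) * (\<Prod>l\<in>J. g (x, q j, q l))) \<in> borel_measurable (PiM (insert j J) (\<lambda>_. M))" for x
    by measurable
  have upd_i: "f ((q(i := x)) i, (q(i := x)) j) * (\<Prod>l\<in>J. g ((q(i := x)) i, (q(i := x)) j, (q(i := x)) l))
      = f (x, q j) * (\<Prod>l\<in>J. g (x, q j, q l))" for q x
    using J by (auto intro!: arg_cong2[where f = "(*)"] prod.cong)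
  have upd_j: "f (x, (q(j := y)) j) * (\<Prod>l\<in>J. g (x, (q(j := y)) j, (q(j := y)) l))
      = f (x, y) * (\<Prod>l\<in>J. g (x, y, q l))" for q x y
    using J by (auto intro!: arg_cong2[where f = "(*)"] prod.cong)
  have "(\<integral>\<^sup>+p. f (p i, p j) * (\<Prod>l\<in>J. g (p i, p j, p l)) \<partial>PiM I (\<lambda>_. M))
      = (\<integral>\<^sup>+x. \<integral>\<^sup>+q. f ((q(i := x)) i, (q(i := x)) j) * (\<Prod>l\<in>J. g ((q(i := x)) i, (q(i := x)) j, (q(i := x)) l))
          \<partial>PiM (insert j J) (\<lambda>_. M) \<partial>M)"
    unfolding J(5) by (rule product_nn_integral_insert_rev[OF J(2,3)]) measurable
  also have "\<dots> = (\<integral>\<^sup>+x. \<integral>\<^sup>+y. \<integral>\<^sup>+q. f (x, (q(j := y)) j) * (\<Prod>l\<in>J. g (x, (q(j := y)) j, (q(j := y)) l))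
          \<partial>PiM J (\<lambda>_. M) \<partial>M \<partial>M)"
    unfolding upd_i using J(1,4) by (intro nn_integral_cong product_nn_integral_insert_rev) measurable
  also have "\<dots> = (\<integral>\<^sup>+x. \<integral>\<^sup>+y. f (x, y) * (\<integral>\<^sup>+z. g (x, y, z) \<partial>M) ^ card J \<partial>M \<partial>M)"
  proof (unfold upd_j, intro nn_integral_cong)
    fix x y assume [measurable]: "x \<in> space M" "y \<in> space M"
    have "(\<integral>\<^sup>+q. f (x, y) * (\<Prod>l\<in>J. g (x, y, q l)) \<partial>PiM J (\<lambda>_. M))
        = f (x, y) * (\<integral>\<^sup>+q. (\<Prod>l\<in>J. g (x, y, q l)) \<partial>PiM J (\<lambda>_. M))"
      by (rule nn_integral_cmult) measurable
    also have "(\<integral>\<^sup>+q. (\<Prod>l\<in>J. g (x, y, q l)) \<partial>PiM J (\<lambda>_. M)) = (\<Prod>l\<in>J. \<integral>\<^sup>+z. g (x, y, z) \<partial>M)"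
      by (rule product_nn_integral_prod[OF J(1)]) measurable
    finally show "(\<integral>\<^sup>+q. f (x, y) * (\<Prod>l\<in>J. g (x, y, q l)) \<partial>PiM J (\<lambda>_. M))
        = f (x, y) * (\<integral>\<^sup>+z. g (x, y, z) \<partial>M) ^ card J"
      by simp
  qed
  finally show ?thesis
    unfolding J(6)[symmetric] J_def[symmetric] .
qed

section \<open>A Chernoff majorant for crowded points\<close>

(* The product is e to the number of other points in the lens; on a crowded far pair this is at
   least e^(N - 2), which the factor exp (2 - N) turns into a lower bound 1. *)
definition crowded_pair_majorant ::
    "real \<Rightarrow> real \<Rightarrow> real \<Rightarrow> nat set \<Rightarrow> (nat \<Rightarrow> 'a::metric_space) \<Rightarrow> nat \<Rightarrow> nat \<Rightarrow> ennreal" where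
  "crowded_pair_majorant t R N I p i j =
     indicator (cball (p i) t) (p j)
     + ennreal (exp (2 - N)) * (indicator (cball (p i) (2 * R) - cball (p i) t) (p j)
        * (\<Prod>l\<in>I - {i, j}. ennreal (exp (indicator (cball (p i) R \<inter> cball (p j) R) (p l)))))"

lemma card_image_inter_le_card_others:
  assumes "finite I" "i \<in> I" "j \<in> I"
  shows "card (p ` I \<inter> C) \<le> card {l \<in> I - {i, j}. p l \<in> C} + 2"
proof -
  have "p ` I \<inter> C \<subseteq> p ` {l \<in> I - {i, j}. p l \<in> C} \<union> {p i, p j}"
    by auto
  then have "card (p ` I \<inter> C) \<le> card (p ` {l \<in> I - {i, j}. p l \<in> C} \<union> {p i, p j})"
    using assms(1) by (intro card_mono) auto
  also have "\<dots> \<le> card (p ` {l \<in> I - {i, j}. p l \<in> C}) + card {p i, p j}"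
    by (rule card_Un_le)
  also have "\<dots> \<le> card {l \<in> I - {i, j}. p l \<in> C} + 2"
    using card_image_le[of "{l \<in> I - {i, j}. p l \<in> C}" p] assms(1) card_insert_le_m1[of 2 "{p j}" "p i"]
    by (simp add: card_insert_if)
  finally show ?thesis .
qed

lemma one_le_crowded_pair_majorant:
  fixes p :: "nat \<Rightarrow> 'a::metric_space"
  assumes I: "finite I" "i \<in> I" "j \<in> I" and "0 < N"
    and crowded: "N \<le> real (card (p ` I \<inter> cball (p i) R \<inter> cball (p j) R))"
  shows "1 \<le> crowded_pair_majorant t R N I p i j"
proof (cases "p j \<in> cball (p i) t")
  case True
  then show ?thesis
    by (simp add: crowded_pair_majorant_def)
next
  case False
  define C where "C = cball (p i) R \<inter> cball (p j) R"
  define K where "K = {l \<in> I - {i, j}. p l \<in> C}"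
  have "p ` I \<inter> C \<noteq> {}"
    using crowded \<open>0 < N\<close> by (auto simp: C_def Int_assoc)
  then obtain z where "z \<in> C"
    by auto
  then have "dist (p i) (p j) \<le> 2 * R"
    using dist_triangle[of "p i" "p j" z] by (simp add: C_def dist_commute)
  then have annulus: "p j \<in> cball (p i) (2 * R) - cball (p i) t"
    using False by simp
  have "N - 2 \<le> real (card K)"
    using card_image_inter_le_card_others[OF I, of p C] crowded by (simp add: K_def C_def Int_assoc)
  then have "1 \<le> exp (2 - N) * exp (real (card K))"
    by (simp flip: exp_add)
  also have "real (card K) = (\<Sum>l\<in>I - {i, j}. indicator C (p l))"
    using I(1) by (simp add: K_def indicator_def sum.If_cases Int_def)
  also have "exp (2 - N) * exp \<dots> = exp (2 - N) * (\<Prod>l\<in>I - {i, j}. exp (indicator C (p l)))"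
    by (simp add: exp_sum I(1))
  finally have "ennreal 1 \<le> ennreal (exp (2 - N) * (\<Prod>l\<in>I - {i, j}. exp (indicator C (p l))))"
    by (rule ennreal_leI)
  then have "1 \<le> ennreal (exp (2 - N)) * (\<Prod>l\<in>I - {i, j}. ennreal (exp (indicator C (p l))))"
    by (simp add: prod_ennreal ennreal_mult prod_nonneg)
  then show ?thesis
    using annulus by (simp add: crowded_pair_majorant_def C_def add_increasing)
qed

lemma card_crowded_le_sum_majorant:
  fixes p :: "nat \<Rightarrow> 'a::metric_space"
  assumes "finite I" "0 < N"
  shows "of_nat (card {x \<in> p ` I. \<exists>y \<in> p ` I - {x}. N \<le> real (card (p ` I \<inter> cball x R \<inter> cball y R))})
    \<le> (\<Sum>i\<in>I. \<Sum>j\<in>I - {i}. crowded_pair_majorant t R N I p i j)"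
proof -
  define crowded where "crowded x \<longleftrightarrow> (\<exists>y \<in> p ` I - {x}. N \<le> real (card (p ` I \<inter> cball x R \<inter> cball y R)))" for x
  define J where "J = {i \<in> I. crowded (p i)}"
  have "{x \<in> p ` I. crowded x} = p ` J"
    by (auto simp: J_def)
  then have "of_nat (card {x \<in> p ` I. crowded x}) \<le> (of_nat (card J) :: ennreal)"
    using card_image_le[of J p] assms(1) by (simp add: J_def)
  also have "\<dots> = (\<Sum>i\<in>J. 1)"
    by simp
  also have "\<dots> \<le> (\<Sum>i\<in>J. \<Sum>j\<in>I - {i}. crowded_pair_majorant t R N I p i j)"
  proof (rule sum_mono)
    fix i assume "i \<in> J"
    then obtain j where j: "j \<in> I" "p j \<noteq> p i" "N \<le> real (card (p ` I \<inter> cball (p i) R \<inter> cball (p j) R))"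
      by (auto simp: J_def crowded_def)
    then have "1 \<le> crowded_pair_majorant t R N I p i j"
      using \<open>i \<in> J\<close> assms by (intro one_le_crowded_pair_majorant) (auto simp: J_def)
    also have "\<dots> \<le> (\<Sum>j\<in>I - {i}. crowded_pair_majorant t R N I p i j)"
      using j assms(1) by (intro member_le_sum) auto
    finally show "1 \<le> (\<Sum>j\<in>I - {i}. crowded_pair_majorant t R N I p i j)" .
  qed
  also have "\<dots> \<le> (\<Sum>i\<in>I. \<Sum>j\<in>I - {i}. crowded_pair_majorant t R N I p i j)"
    using assms(1) by (intro sum_mono2) (auto simp: J_def)
  finally show ?thesis
    by (simp add: crowded_def)
qed

section \<open>Poisson sums\<close>

lemma sums_index_mult_exp_series:
  fixes x :: real
  shows "(\<lambda>n. real n * x ^ n / fact n) sums (x * exp x)"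
proof -
  have "(\<lambda>m. x * (x ^ m / fact m)) sums (x * exp x)"
    using exp_converges[of x] by (intro sums_mult) (simp add: divide_inverse_commute)
  moreover have "(\<lambda>m. real (Suc m) * x ^ Suc m / fact (Suc m)) = (\<lambda>m. x * (x ^ m / fact m))"
    by (rule ext) (simp add: field_simps del: of_nat_Suc)
  ultimately show ?thesis
    using sums_Suc_iff[of "\<lambda>n. real n * x ^ n / fact n"] by simp
qed

lemma sums_falling_index_mult_exp_series:
  fixes lam z :: real
  shows "(\<lambda>n. real (n * (n - 1)) * lam ^ n * z ^ (n - 2) / fact n) sums (lam\<^sup>2 * exp (lam * z))"
proof -
  have "(\<lambda>m. lam\<^sup>2 * ((lam * z) ^ m / fact m)) sums (lam\<^sup>2 * exp (lam * z))"
    using exp_converges[of "lam * z"] by (intro sums_mult) (simp add: divide_inverse_commute)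
  moreover have "(\<lambda>m. real ((m + 2) * (m + 2 - 1)) * lam ^ (m + 2) * z ^ (m + 2 - 2) / fact (m + 2))
      = (\<lambda>m. lam\<^sup>2 * ((lam * z) ^ m / fact m))"
  proof (rule ext)
    fix m
    have c: "real ((m + 2) * (m + 2 - 1)) = real (m + 2) * real (m + 1)"
      unfolding of_nat_mult by simp
    have f: "(fact (m + 2) :: real) = real (m + 2) * real (m + 1) * fact m"
      by (simp add: numeral_2_eq_2 fact_Suc)
    show "real ((m + 2) * (m + 2 - 1)) * lam ^ (m + 2) * z ^ (m + 2 - 2) / fact (m + 2)
        = lam\<^sup>2 * ((lam * z) ^ m / fact m)"
      unfolding c f by (simp add: power_add power_mult_distrib power2_eq_square del: of_nat_add)
  qed
  ultimately show ?thesis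
    using sums_iff_shift[of "\<lambda>n. real (n * (n - 1)) * lam ^ n * z ^ (n - 2) / fact n" 2]
    by (simp add: numeral_2_eq_2)
qed

lemma sums_pair_count_series:
  fixes lam A B T W c :: real
  shows "(\<lambda>n. lam ^ n / fact n * (real (n * (n - 1)) * (A ^ (n - 1) * T + c * (A * W * B ^ (n - 2)))))
    sums (A * T * (lam\<^sup>2 * exp (lam * A)) + c * A * W * (lam\<^sup>2 * exp (lam * B)))"
proof -
  have "lam ^ n / fact n * (real (n * (n - 1)) * (A ^ (n - 1) * T + c * (A * W * B ^ (n - 2))))
      = A * T * (real (n * (n - 1)) * lam ^ n * A ^ (n - 2) / fact n)
        + c * A * W * (real (n * (n - 1)) * lam ^ n * B ^ (n - 2) / fact n)" for n
  proof (cases "n < 2")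
    case False
    then have "n - 1 = Suc (n - 2)"
      by simp
    then have "A ^ (n - 1) = A * A ^ (n - 2)"
      by simp
    then show ?thesis
      by (simp add: field_simps)
  qed (auto simp: less_2_cases_iff)
  moreover have "(\<lambda>n. A * T * (real (n * (n - 1)) * lam ^ n * A ^ (n - 2) / fact n)
      + c * A * W * (real (n * (n - 1)) * lam ^ n * B ^ (n - 2) / fact n))
    sums (A * T * (lam\<^sup>2 * exp (lam * A)) + c * A * W * (lam\<^sup>2 * exp (lam * B)))"
    by (intro sums_add sums_mult sums_falling_index_mult_exp_series)
  ultimately show ?thesis
    by simp
qed

lemma ppp_expect_le_sums:
  assumes "0 \<le> lam" and g: "\<And>n. 0 \<le> g n"
    and F: "\<And>n. (\<integral>\<^sup>+p. F (p ` {..<n}) \<partial>PiM {..<n} (\<lambda>_. lebesgue_on Om)) \<le> ennreal (g n)"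
    and "(\<lambda>n. lam ^ n / fact n * g n) sums s"
  shows "ppp_expect lam Om F \<le> ennreal (exp (- lam * measure lebesgue Om) * s)"
proof -
  define c where "c n = exp (- lam * measure lebesgue Om) * lam ^ n / fact n" for n
  have c: "0 \<le> c n" for n
    using \<open>0 \<le> lam\<close> by (simp add: c_def)
  have "ppp_expect lam Om F \<le> (\<Sum>n. ennreal (c n * g n))"
    unfolding ppp_expect_def c_def[symmetric]
    using F c g by (intro suminf_le) (auto simp: ennreal_mult intro: mult_left_mono)
  also have "\<dots> = ennreal (exp (- lam * measure lebesgue Om) * s)"
  proof (rule suminf_ennreal_eq)
    show "0 \<le> c n * g n" for n
      using c g by simp
    show "(\<lambda>n. c n * g n) sums (exp (- lam * measure lebesgue Om) * s)"
      using sums_mult[OF assms(4), of "exp (- lam * measure lebesgue Om)"] by (simp add: c_def mult_ac)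
  qed
  finally show ?thesis .
qed

section \<open>Configurations of points in \<open>\<Omega>\<close>\<close>

context
  fixes Om :: "'a::euclidean_space set"
  assumes bounded_Om: "bounded Om" and sets_Om: "Om \<in> sets lebesgue"
begin

lemma sigma_finite_lebesgue_on: "sigma_finite_measure (lebesgue_on Om)"
  using finite_measure_lebesgue_on[OF bounded_set_imp_lmeasurable[OF bounded_Om sets_Om]]
  by (simp add: finite_measure_def)

lemma emeasure_lebesgue_on_inter:
  "A \<in> sets lebesgue \<Longrightarrow> emeasure (lebesgue_on Om) (A \<inter> Om) = emeasure lebesgue (A \<inter> Om)"
  using sets_Om by (subst emeasure_restrict_space) auto

lemma emeasure_lebesgue_on_self: "emeasure (lebesgue_on Om) Om = ennreal (measure lebesgue Om)"
  using emeasure_lebesgue_on_inter[of UNIV] bounded_set_imp_lmeasurable[OF bounded_Om sets_Om]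
  by (simp add: emeasure_eq_measure2)

lemma nn_integral_indicator_cball_le:
  assumes "0 \<le> s"
  shows "(\<integral>\<^sup>+y. indicator (cball x s) y \<partial>lebesgue_on Om) \<le> ennreal ((s / unit_vol_radius TYPE('a)) ^ DIM('a))"
proof -
  have "(\<integral>\<^sup>+y. indicator (cball x s) y \<partial>lebesgue_on Om) = (\<integral>\<^sup>+y. indicator (cball x s \<inter> Om) y \<partial>lebesgue_on Om)"
    by (rule nn_integral_cong) (simp add: space_restrict_space indicator_def)
  also have "\<dots> = emeasure (lebesgue_on Om) (cball x s \<inter> Om)"
    using sets_Om by (intro nn_integral_indicator) (auto simp: sets_restrict_space_iff)
  also have "\<dots> = emeasure lebesgue (cball x s \<inter> Om)"
    by (rule emeasure_lebesgue_on_inter) simp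
  also have "\<dots> \<le> emeasure lebesgue (cball x s)"
    by (rule emeasure_mono) auto
  also have "\<dots> = ennreal ((s / unit_vol_radius TYPE('a)) ^ DIM('a))"
    using assms by (rule emeasure_cball_unit_vol_radius)
  finally show ?thesis .
qed

lemma nn_integral_exp_indicator_lens_le:
  assumes "0 \<le> t" "t \<le> dist x y" "t \<le> 2 * R"
  shows "(\<integral>\<^sup>+z. ennreal (exp (indicator (cball x R \<inter> cball y R) z)) \<partial>lebesgue_on Om)
    \<le> ennreal (measure lebesgue Om + (exp 1 - 1) * (sqrt (R\<^sup>2 - t\<^sup>2 / 4) / unit_vol_radius TYPE('a)) ^ DIM('a))"
proof -
  define \<rho> where "\<rho> = sqrt (R\<^sup>2 - t\<^sup>2 / 4)"
  have "0 \<le> \<rho>"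
    using lens_radius_nonneg assms(1,3) by (simp add: \<rho>_def)
  have e: "0 \<le> exp 1 - (1::real)"
    using exp_ge_add_one_self[of 1] by simp
  have "ennreal (exp (indicator (cball x R \<inter> cball y R) z)) \<le> 1 + ennreal (exp 1 - 1) * indicator (cball (midpoint x y) \<rho>) z" for z
  proof (cases "z \<in> cball x R \<inter> cball y R")
    case True
    then have "z \<in> cball (midpoint x y) \<rho>"
      using lens_subset_cball_midpoint[OF assms(1,2), of R] unfolding \<rho>_def by blast
    moreover have "1 + ennreal (exp 1 - 1) = ennreal (exp 1)"
      using e ennreal_plus[of 1 "exp 1 - 1"] by simp
    ultimately show ?thesis
      using True by simp
  qed simp
  then have "(\<integral>\<^sup>+z. ennreal (exp (indicator (cball x R \<inter> cball y R) z)) \<partial>lebesgue_on Om)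
      \<le> (\<integral>\<^sup>+z. 1 + ennreal (exp 1 - 1) * indicator (cball (midpoint x y) \<rho>) z \<partial>lebesgue_on Om)"
    by (rule nn_integral_mono)
  also have "\<dots> = ennreal (measure lebesgue Om)
      + ennreal (exp 1 - 1) * (\<integral>\<^sup>+z. indicator (cball (midpoint x y) \<rho>) z \<partial>lebesgue_on Om)"
    by (subst nn_integral_add) (simp_all add: nn_integral_cmult emeasure_lebesgue_on_self)
  also have "\<dots> \<le> ennreal (measure lebesgue Om) + ennreal (exp 1 - 1) * ennreal ((\<rho> / unit_vol_radius TYPE('a)) ^ DIM('a))"
    using \<open>0 \<le> \<rho>\<close> by (intro add_left_mono mult_left_mono nn_integral_indicator_cball_le) simp_all
  also have "\<dots> = ennreal (measure lebesgue Om + (exp 1 - 1) * (\<rho> / unit_vol_radius TYPE('a)) ^ DIM('a))"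
    using e \<open>0 \<le> \<rho>\<close> unit_vol_radius_pos[where 'a = 'a] by (simp add: ennreal_mult ennreal_plus)
  finally show ?thesis
    by (simp add: \<rho>_def)
qed

lemma nn_integral_PiM_indicator_cball_le:
  assumes I: "finite I" "i \<in> I" "j \<in> I" "i \<noteq> j" and "0 \<le> s"
  shows "(\<integral>\<^sup>+p. indicator (cball (p i) s) (p j) \<partial>PiM I (\<lambda>_. lebesgue_on Om))
    \<le> ennreal (measure lebesgue Om ^ (card I - 1) * (s / unit_vol_radius TYPE('a)) ^ DIM('a))"
proof -
  let ?M = "lebesgue_on Om" and ?A = "measure lebesgue Om"
  let ?V = "(s / unit_vol_radius TYPE('a)) ^ DIM('a)"
  have close: "(\<lambda>(x, y). indicator (cball x s) y :: ennreal) \<in> borel_measurable (?M \<Otimes>\<^sub>M ?M)"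
    by measurable
  have "(\<integral>\<^sup>+p. indicator (cball (p i) s) (p j) \<partial>PiM I (\<lambda>_. ?M))
      = (\<integral>\<^sup>+x. \<integral>\<^sup>+y. indicator (cball x s) y * ennreal ?A ^ (card I - 2) \<partial>?M \<partial>?M)"
    using nn_integral_PiM_pair_prod[OF sigma_finite_lebesgue_on I close, of "\<lambda>_. 1"]
    by (simp add: emeasure_lebesgue_on_self)
  also have "\<dots> \<le> (\<integral>\<^sup>+x. ennreal ?V * ennreal ?A ^ (card I - 2) \<partial>?M)"
    using \<open>0 \<le> s\<close> by (intro nn_integral_mono)
      (simp add: nn_integral_multc mult_right_mono nn_integral_indicator_cball_le)
  also have "\<dots> = ennreal (?A ^ (card I - 1) * ?V)"
  proof -
    have "card {i, j} \<le> card I"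
      using I by (intro card_mono) auto
    then have "card I - 1 = Suc (card I - 2)"
      using I(4) by simp
    then show ?thesis
      using \<open>0 \<le> s\<close> unit_vol_radius_pos[where 'a = 'a]
      by (simp add: emeasure_lebesgue_on_self ennreal_mult ennreal_power mult_ac)
  qed
  finally show ?thesis .
qed

lemma nn_integral_PiM_far_pair_le:
  assumes I: "finite I" "i \<in> I" "j \<in> I" "i \<noteq> j" and t: "0 \<le> t" "t \<le> 2 * R"
  defines "B \<equiv> measure lebesgue Om + (exp 1 - 1) * (sqrt (R\<^sup>2 - t\<^sup>2 / 4) / unit_vol_radius TYPE('a)) ^ DIM('a)"
  shows "(\<integral>\<^sup>+p. indicator (cball (p i) (2 * R) - cball (p i) t) (p j)
        * (\<Prod>l\<in>I - {i, j}. ennreal (exp (indicator (cball (p i) R \<inter> cball (p j) R) (p l))))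
      \<partial>PiM I (\<lambda>_. lebesgue_on Om))
    \<le> ennreal (measure lebesgue Om * (2 * R / unit_vol_radius TYPE('a)) ^ DIM('a) * B ^ (card I - 2))"
proof -
  let ?M = "lebesgue_on Om" and ?A = "measure lebesgue Om"
  let ?W = "(2 * R / unit_vol_radius TYPE('a)) ^ DIM('a)"
  have far: "(\<lambda>(x, y). indicator (cball x (2 * R) - cball x t) y :: ennreal) \<in> borel_measurable (?M \<Otimes>\<^sub>M ?M)"
    by measurable
  have lens: "(\<lambda>(x, y, z). ennreal (exp (indicator (cball x R \<inter> cball y R) z)))
      \<in> borel_measurable (?M \<Otimes>\<^sub>M (?M \<Otimes>\<^sub>M ?M))"
    by measurable
  have "0 \<le> exp 1 - (1::real)" "0 \<le> sqrt (R\<^sup>2 - t\<^sup>2 / 4)" "0 < unit_vol_radius TYPE('a)"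
    using exp_ge_add_one_self[of 1] lens_radius_nonneg[OF t] unit_vol_radius_pos[where 'a = 'a]
    by simp_all
  then have "0 \<le> B" "0 \<le> ?W"
    using t by (simp_all add: B_def)
  have "(\<integral>\<^sup>+p. indicator (cball (p i) (2 * R) - cball (p i) t) (p j)
        * (\<Prod>l\<in>I - {i, j}. ennreal (exp (indicator (cball (p i) R \<inter> cball (p j) R) (p l))))
      \<partial>PiM I (\<lambda>_. ?M))
    = (\<integral>\<^sup>+x. \<integral>\<^sup>+y. indicator (cball x (2 * R) - cball x t) y
        * (\<integral>\<^sup>+z. ennreal (exp (indicator (cball x R \<inter> cball y R) z)) \<partial>?M) ^ (card I - 2) \<partial>?M \<partial>?M)"
    using nn_integral_PiM_pair_prod[OF sigma_finite_lebesgue_on I far lens] by simp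
  also have "\<dots> \<le> (\<integral>\<^sup>+x. \<integral>\<^sup>+y. indicator (cball x (2 * R)) y * ennreal B ^ (card I - 2) \<partial>?M \<partial>?M)"
  proof (intro nn_integral_mono)
    fix x y
    show "indicator (cball x (2 * R) - cball x t) y
        * (\<integral>\<^sup>+z. ennreal (exp (indicator (cball x R \<inter> cball y R) z)) \<partial>?M) ^ (card I - 2)
      \<le> indicator (cball x (2 * R)) y * ennreal B ^ (card I - 2)"
    proof (cases "y \<in> cball x (2 * R) - cball x t")
      case True
      then have "(\<integral>\<^sup>+z. ennreal (exp (indicator (cball x R \<inter> cball y R) z)) \<partial>?M) \<le> ennreal B"
        unfolding B_def using t by (intro nn_integral_exp_indicator_lens_le) auto
      then show ?thesis
        using True by (simp add: power_mono)
    qed (simp add: indicator_def)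
  qed
  also have "\<dots> \<le> (\<integral>\<^sup>+x. ennreal ?W * ennreal B ^ (card I - 2) \<partial>?M)"
    using t by (intro nn_integral_mono)
      (simp add: nn_integral_multc mult_right_mono nn_integral_indicator_cball_le)
  also have "\<dots> = ennreal (?A * ?W * B ^ (card I - 2))"
    using \<open>0 \<le> B\<close> \<open>0 \<le> ?W\<close> by (simp add: emeasure_lebesgue_on_self ennreal_mult ennreal_power mult_ac)
  finally show ?thesis .
qed

lemma nn_integral_crowded_pair_majorant_le:
  assumes I: "finite I" "i \<in> I" "j \<in> I" "i \<noteq> j" and t: "0 \<le> t" "t \<le> 2 * R"
  defines "r \<equiv> unit_vol_radius TYPE('a)" and "A \<equiv> measure lebesgue Om"
  defines "B \<equiv> A + (exp 1 - 1) * (sqrt (R\<^sup>2 - t\<^sup>2 / 4) / r) ^ DIM('a)"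
  shows "(\<integral>\<^sup>+p. crowded_pair_majorant t R N I p i j \<partial>PiM I (\<lambda>_. lebesgue_on Om))
    \<le> ennreal (A ^ (card I - 1) * (t / r) ^ DIM('a) + exp (2 - N) * (A * (2 * R / r) ^ DIM('a) * B ^ (card I - 2)))"
proof -
  have [measurable]: "i \<in> I" "j \<in> I" "\<And>l. l \<in> I - {i, j} \<Longrightarrow> l \<in> I"
    using I by auto
  have "0 < r" "0 \<le> A" "0 \<le> exp 1 - (1::real)"
    using unit_vol_radius_pos[where 'a = 'a] exp_ge_add_one_self[of 1] by (simp_all add: r_def A_def)
  then have "0 \<le> B"
    using lens_radius_nonneg[OF t] by (simp add: B_def)
  have "(\<integral>\<^sup>+p. crowded_pair_majorant t R N I p i j \<partial>PiM I (\<lambda>_. lebesgue_on Om))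
      = (\<integral>\<^sup>+p. indicator (cball (p i) t) (p j) \<partial>PiM I (\<lambda>_. lebesgue_on Om))
        + ennreal (exp (2 - N)) * (\<integral>\<^sup>+p. indicator (cball (p i) (2 * R) - cball (p i) t) (p j)
            * (\<Prod>l\<in>I - {i, j}. ennreal (exp (indicator (cball (p i) R \<inter> cball (p j) R) (p l))))
          \<partial>PiM I (\<lambda>_. lebesgue_on Om))"
    unfolding crowded_pair_majorant_def by (subst nn_integral_add) (measurable, simp add: nn_integral_cmult)
  also have "\<dots> \<le> ennreal (A ^ (card I - 1) * (t / r) ^ DIM('a))
      + ennreal (exp (2 - N)) * ennreal (A * (2 * R / r) ^ DIM('a) * B ^ (card I - 2))"
    unfolding A_def B_def r_def
    using nn_integral_PiM_far_pair_le[OF I t] nn_integral_PiM_indicator_cball_le[OF I t(1)]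
    by (intro add_mono mult_left_mono) simp_all
  also have "\<dots> = ennreal (A ^ (card I - 1) * (t / r) ^ DIM('a) + exp (2 - N) * (A * (2 * R / r) ^ DIM('a) * B ^ (card I - 2)))"
    using \<open>0 < r\<close> \<open>0 \<le> A\<close> \<open>0 \<le> B\<close> t by (simp add: ennreal_plus ennreal_mult)
  finally show ?thesis .
qed

lemma nn_integral_card_crowded_le:
  fixes I :: "nat set"
  assumes I: "finite I" and "0 < N" and t: "0 \<le> t" "t \<le> 2 * R"
  defines "r \<equiv> unit_vol_radius TYPE('a)" and "A \<equiv> measure lebesgue Om"
  defines "B \<equiv> A + (exp 1 - 1) * (sqrt (R\<^sup>2 - t\<^sup>2 / 4) / r) ^ DIM('a)"
  defines "bound \<equiv> A ^ (card I - 1) * (t / r) ^ DIM('a) + exp (2 - N) * (A * (2 * R / r) ^ DIM('a) * B ^ (card I - 2))"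
  shows "(\<integral>\<^sup>+p. of_nat (card {x \<in> p ` I. \<exists>y \<in> p ` I - {x}. N \<le> real (card (p ` I \<inter> cball x R \<inter> cball y R))})
      \<partial>PiM I (\<lambda>_. lebesgue_on Om))
    \<le> of_nat (card I * (card I - 1)) * ennreal bound"
proof -
  let ?P = "PiM I (\<lambda>_. lebesgue_on Om)"
  have "(\<integral>\<^sup>+p. of_nat (card {x \<in> p ` I. \<exists>y \<in> p ` I - {x}. N \<le> real (card (p ` I \<inter> cball x R \<inter> cball y R))}) \<partial>?P)
      \<le> (\<integral>\<^sup>+p. (\<Sum>i\<in>I. \<Sum>j\<in>I - {i}. crowded_pair_majorant t R N I p i j) \<partial>?P)"
    using card_crowded_le_sum_majorant[OF I \<open>0 < N\<close>] by (rule nn_integral_mono)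
  also have "\<dots> = (\<Sum>i\<in>I. \<Sum>j\<in>I - {i}. \<integral>\<^sup>+p. crowded_pair_majorant t R N I p i j \<partial>?P)"
  proof -
    have majorant: "(\<lambda>p. crowded_pair_majorant t R N I p i j) \<in> borel_measurable ?P" if "i \<in> I" "j \<in> I" for i j
    proof -
      have [measurable]: "i \<in> I" "j \<in> I" "\<And>l. l \<in> I - {i, j} \<Longrightarrow> l \<in> I"
        using that by auto
      show ?thesis
        unfolding crowded_pair_majorant_def by measurable
    qed
    show ?thesis
      using I by (subst nn_integral_sum) (auto intro!: borel_measurable_sum majorant sum.cong nn_integral_sum)
  qed
  also have "\<dots> \<le> (\<Sum>i\<in>I. \<Sum>j\<in>I - {i}. ennreal bound)"
    unfolding bound_def B_def A_def r_def
    using nn_integral_crowded_pair_majorant_le[OF _ _ _ _ t] I by (intro sum_mono) auto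
  also have "\<dots> = of_nat (card I * (card I - 1)) * ennreal bound"
    using I by (simp add: card_Diff_subset mult.assoc)
  finally show ?thesis .
qed

lemma AE_PiM_lebesgue_on_inj_on:
  assumes I: "finite I"
  shows "AE p in PiM I (\<lambda>_. lebesgue_on Om). inj_on p I"
proof -
  have "AE p in PiM I (\<lambda>_. lebesgue_on Om). p i \<noteq> p j" if ij: "i \<in> I" "j \<in> I" "i \<noteq> j" for i j
  proof -
    have [measurable]: "i \<in> I" "j \<in> I"
      using ij by auto
    have "(\<integral>\<^sup>+p. indicator (cball (p i) 0) (p j) \<partial>PiM I (\<lambda>_. lebesgue_on Om)) \<le> ennreal 0"
      using nn_integral_PiM_indicator_cball_le[OF I ij, of 0] by (simp add: zero_power)
    moreover have "(\<lambda>p. indicator (cball (p i) 0) (p j) :: ennreal) \<in> borel_measurable (PiM I (\<lambda>_. lebesgue_on Om))"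
      by measurable
    ultimately have "AE p in PiM I (\<lambda>_. lebesgue_on Om). indicator (cball (p i) 0) (p j) = (0::ennreal)"
      by (simp add: nn_integral_0_iff_AE)
    then show ?thesis
      by eventually_elim (simp add: indicator_def)
  qed
  then have "AE p in PiM I (\<lambda>_. lebesgue_on Om). \<forall>(i, j) \<in> I \<times> I. i \<noteq> j \<longrightarrow> p i \<noteq> p j"
    using I by (intro AE_finite_allI) auto
  then show ?thesis
    by eventually_elim (auto simp: inj_on_def)
qed

lemma nn_integral_PiM_card_image:
  assumes I: "finite I"
  shows "(\<integral>\<^sup>+p. of_nat (card (p ` I)) \<partial>PiM I (\<lambda>_. lebesgue_on Om))
    = ennreal (real (card I) * measure lebesgue Om ^ card I)"
proof -
  interpret product_sigma_finite "\<lambda>_. lebesgue_on Om"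
    using sigma_finite_lebesgue_on by (simp add: product_sigma_finite_def)
  have "(\<integral>\<^sup>+p. of_nat (card (p ` I)) \<partial>PiM I (\<lambda>_. lebesgue_on Om)) = (\<integral>\<^sup>+p. of_nat (card I) \<partial>PiM I (\<lambda>_. lebesgue_on Om))"
    using AE_PiM_lebesgue_on_inj_on[OF I] by (intro nn_integral_cong_AE) (auto elim!: eventually_mono simp: card_image)
  also have "\<dots> = of_nat (card I) * (\<Prod>i\<in>I. emeasure (lebesgue_on Om) (space (lebesgue_on Om)))"
    using I by (simp add: emeasure_PiM space_PiM flip: PiE_def)
  also have "\<dots> = ennreal (real (card I) * measure lebesgue Om ^ card I)"
    by (simp add: space_restrict_space emeasure_lebesgue_on_self ennreal_mult ennreal_power
        ennreal_of_nat_eq_real_of_nat prod_ennreal)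
  finally show ?thesis .
qed

lemma ppp_expect_card:
  assumes "0 \<le> lam"
  shows "ppp_expect lam Om (\<lambda>X. of_nat (card X)) = ennreal (lam * measure lebesgue Om)"
proof -
  define A where "A = measure lebesgue Om"
  define c where "c n = exp (- lam * A) * lam ^ n / fact n" for n
  have "0 \<le> A" "0 \<le> c n" for n
    using assms by (simp_all add: A_def c_def)
  have "ppp_expect lam Om (\<lambda>X. of_nat (card X)) = (\<Sum>n. ennreal (c n) * ennreal (real n * A ^ n))"
    unfolding ppp_expect_def A_def[symmetric] c_def[symmetric]
    by (simp only: nn_integral_PiM_card_image[OF finite_lessThan] card_lessThan A_def)
  also have "\<dots> = (\<Sum>n. ennreal (c n * (real n * A ^ n)))"
    using \<open>0 \<le> A\<close> \<open>\<And>n. 0 \<le> c n\<close> by (simp add: ennreal_mult)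
  also have "\<dots> = ennreal (lam * A)"
  proof (rule suminf_ennreal_eq)
    show "0 \<le> c n * (real n * A ^ n)" for n
      using \<open>0 \<le> A\<close> \<open>0 \<le> c n\<close> by simp
    have "(\<lambda>n. exp (- lam * A) * (real n * (lam * A) ^ n / fact n)) sums (exp (- lam * A) * (lam * A * exp (lam * A)))"
      by (intro sums_mult sums_index_mult_exp_series)
    then show "(\<lambda>n. c n * (real n * A ^ n)) sums (lam * A)"
      by (simp add: c_def power_mult_distrib mult_ac flip: exp_add)
  qed
  finally show ?thesis
    by (simp add: A_def)
qed

lemma ppp_expect_crowded_le:
  assumes "0 \<le> lam" "0 < N" and t: "0 \<le> t" "t \<le> 2 * R"
  defines "r \<equiv> unit_vol_radius TYPE('a)" and "A \<equiv> measure lebesgue Om"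
  defines "V \<equiv> (sqrt (R\<^sup>2 - t\<^sup>2 / 4) / r) ^ DIM('a)"
  shows "ppp_expect lam Om (\<lambda>X. of_nat (card {x \<in> X. \<exists>y \<in> X - {x}. N \<le> real (card (X \<inter> cball x R \<inter> cball y R))}))
    \<le> ennreal (lam * A * (lam * (t / r) ^ DIM('a) + lam * (2 * R / r) ^ DIM('a) * exp (2 - N + lam * (exp 1 - 1) * V)))"
proof -
  define T where "T = (t / r) ^ DIM('a)"
  define W where "W = (2 * R / r) ^ DIM('a)"
  define B where "B = A + (exp 1 - 1) * V"
  define h where "h n = A ^ (n - 1) * T + exp (2 - N) * (A * W * B ^ (n - 2))" for n
  define g where "g n = real (n * (n - 1)) * h n" for n
  have "0 < r" "0 \<le> A" "0 \<le> exp 1 - (1::real)"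
    using unit_vol_radius_pos[where 'a = 'a] exp_ge_add_one_self[of 1] by (simp_all add: r_def A_def)
  then have "0 \<le> T" "0 \<le> W" "0 \<le> B"
    using t lens_radius_nonneg[OF t] by (simp_all add: T_def W_def B_def V_def)
  then have h: "0 \<le> h n" and g: "0 \<le> g n" for n
    using \<open>0 \<le> A\<close> by (simp_all add: g_def h_def)
  have bound: "(\<integral>\<^sup>+p. of_nat (card {x \<in> p ` {..<n}. \<exists>y \<in> p ` {..<n} - {x}.
        N \<le> real (card (p ` {..<n} \<inter> cball x R \<inter> cball y R))}) \<partial>PiM {..<n} (\<lambda>_. lebesgue_on Om))
      \<le> ennreal (g n)" for n
  proof -
    have "(\<integral>\<^sup>+p. of_nat (card {x \<in> p ` {..<n}. \<exists>y \<in> p ` {..<n} - {x}.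
        N \<le> real (card (p ` {..<n} \<inter> cball x R \<inter> cball y R))}) \<partial>PiM {..<n} (\<lambda>_. lebesgue_on Om))
      \<le> of_nat (n * (n - 1)) * ennreal (h n)"
      using nn_integral_card_crowded_le[OF finite_lessThan[of n] \<open>0 < N\<close> t]
      unfolding h_def T_def W_def B_def V_def A_def r_def by simp
    also have "\<dots> = ennreal (g n)"
      using h[of n] by (simp add: g_def ennreal_mult ennreal_of_nat_eq_real_of_nat)
    finally show ?thesis .
  qed
  have sums: "(\<lambda>n. lam ^ n / fact n * g n)
      sums (A * T * (lam\<^sup>2 * exp (lam * A)) + exp (2 - N) * A * W * (lam\<^sup>2 * exp (lam * B)))"
    unfolding g_def h_def by (rule sums_pair_count_series)
  have "ppp_expect lam Om (\<lambda>X. of_nat (card {x \<in> X. \<exists>y \<in> X - {x}. N \<le> real (card (X \<inter> cball x R \<inter> cball y R))}))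
    \<le> ennreal (exp (- lam * A) * (A * T * (lam\<^sup>2 * exp (lam * A)) + exp (2 - N) * A * W * (lam\<^sup>2 * exp (lam * B))))"
    using ppp_expect_le_sums[OF \<open>0 \<le> lam\<close> g bound sums] by (simp only: A_def)
  also have "exp (- lam * A) * (A * T * (lam\<^sup>2 * exp (lam * A)) + exp (2 - N) * A * W * (lam\<^sup>2 * exp (lam * B)))
      = lam * A * (lam * T + lam * W * exp (2 - N + lam * (exp 1 - 1) * V))"
    by (simp add: B_def power2_eq_square algebra_simps flip: exp_add)
  finally show ?thesis
    by (simp add: T_def W_def)
qed

end

theorem lemma2p4:
  fixes Om :: "'a::euclidean_space set"
    and d :: nat and lam Delta eta r :: real
  assumes "d = DIM('a)" and "d \<ge> 1000"
    and "bounded Om" and "Om \<in> sets lebesgue"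
    and "lam = (sqrt d / (8 * ln d)) ^ d"
    and "Delta = 2 ^ d * lam"
    and "eta = exp (- ((ln (real d))\<^sup>2 / 8))"
    and "r = unit_vol_radius TYPE('a)"
  shows "ppp_expect lam Om
           (\<lambda>X. of_nat (card {x \<in> X. \<exists>y \<in> X - {x}.
                  real (card (X \<inter> cball x (2 * r) \<inter> cball y (2 * r))) \<ge> eta * Delta}))
         \<le> ennreal (1 / (2 * d)) * ppp_expect lam Om (\<lambda>X. of_nat (card X))"
proof -
  define u where "u = 3 * ln d / sqrt d"
  define A where "A = measure lebesgue Om"
  have "0 < r"
    using unit_vol_radius_pos by (simp add: assms(8))
  have "0 < lam" "0 \<le> u" "u \<le> 4"
    using ln_ge_four[of d] ln_mult_le_sqrt[of d] assms(2) by (simp_all add: assms(5) u_def field_simps)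
  then have "0 < eta * Delta"
    by (simp add: assms(6,7))
  have "(2 * r)\<^sup>2 - (u * r)\<^sup>2 / 4 = r\<^sup>2 * (4 - u\<^sup>2 / 4)"
    by (simp add: power_mult_distrib algebra_simps)
  then have rescale: "u * r / r = u" "2 * (2 * r) / r = 4" "sqrt ((2 * r)\<^sup>2 - (u * r)\<^sup>2 / 4) / r = sqrt (4 - u\<^sup>2 / 4)"
    using \<open>0 < r\<close> by (simp_all add: real_sqrt_mult)
  have "ppp_expect lam Om
           (\<lambda>X. of_nat (card {x \<in> X. \<exists>y \<in> X - {x}. eta * Delta \<le> real (card (X \<inter> cball x (2 * r) \<inter> cball y (2 * r)))}))
      \<le> ennreal (lam * A * (lam * u ^ d + lam * 4 ^ d * exp (2 - eta * Delta + lam * (exp 1 - 1) * sqrt (4 - u\<^sup>2 / 4) ^ d)))"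
    using ppp_expect_crowded_le[OF assms(3,4) _ \<open>0 < eta * Delta\<close>, of lam "u * r" "2 * r"] \<open>0 < lam\<close> \<open>0 \<le> u\<close> \<open>u \<le> 4\<close> \<open>0 < r\<close>
    unfolding assms(8)[symmetric] rescale by (simp add: A_def assms(1))
  also have "\<dots> \<le> ennreal (1 / (2 * d) * (lam * A))"
    using mult_left_mono[OF parameter_bound[OF assms(2,5,6,7)], of "lam * A"] \<open>0 < lam\<close>
    by (intro ennreal_leI) (simp add: A_def u_def mult_ac)
  also have "\<dots> = ennreal (1 / (2 * d)) * ppp_expect lam Om (\<lambda>X. of_nat (card X))"
    using ppp_expect_card[OF assms(3,4), of lam] \<open>0 < lam\<close> by (simp add: A_def ennreal_mult[symmetric])
  finally show ?thesis .
qed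

end
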